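(* Let $p$ be a prime and $\Gamma_p=T^{p-1}\rtimes_\rho C_p$. Then: (1) for every $t\in T^{p-1}$ the element $ta$ has order $p$, and the subgroup $\langle ta\rangle$ is conjugate in $\Gamma_p$ to $C_p=\langle a\rangle$; (2) the centre of $\Gamma_p$ is $Z(\Gamma_p)=\langle(\xi_p,\xi_p^2,\dots,\xi_p^{p-1})\rangle\le T^{p-1}$, where $\xi_p=e^{2\pi\sqrt{-1}/p}$; (3) the normaliser of $C_p$ in $\Gamma_p$ is $N_{\Gamma_p}(C_p)=Z(\Gamma_p)\times C_p$.
   Context: Let $a$ be a fixed generator of $C_p$. $\Gamma_p=T^{p-1}\rtimes_\rho C_p$ is the semidirect product in which $a t a^{-1}=\rho(a)(t)$, where for $t=(t_1,\dots,t_{p-1})\in T^{p-1}$, $\rho(a)(t)=(t_{p-1}^{-1},\,t_1t_{p-1}^{-1},\,t_2t_{p-1}^{-1},\dots,t_{p-2}t_{p-1}^{-1})$. *)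

theory Defs
  imports "HOL-Analysis.Analysis" "HOL-Algebra.Algebra"
begin

definition torus :: "nat \<Rightarrow> (nat \<Rightarrow> complex) set" where
  "torus p = {t. (\<forall>i\<in>{1..p-1}. cmod (t i) = 1) \<and> (\<forall>i. i \<notin> {1..p-1} \<longrightarrow> t i = 1)}"

definition rho :: "nat \<Rightarrow> (nat \<Rightarrow> complex) \<Rightarrow> (nat \<Rightarrow> complex)" where
  "rho p t = (\<lambda>i. if i = 1 then inverse (t (p-1))
                 else if 2 \<le> i \<and> i \<le> p-1 then t (i-1) * inverse (t (p-1))
                 else 1)"

text \<open>Gamma_p = T^{p-1> \<rtimes>_rho C_p.  The pair (t, k) with k < p stands for t a^k,
  and a t a^{-1} = rho(a)(t), so (t a^j)(s a^k) = (t \<cdot> rho(a)^j(s)) a^{j+k}.\<close>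
definition Gamma :: "nat \<Rightarrow> ((nat \<Rightarrow> complex) \<times> nat) monoid" where
  "Gamma p = \<lparr> carrier = torus p \<times> {..<p},
     mult = (\<lambda>(t, j) (s, k). (\<lambda>i. t i * ((rho p ^^ j) s) i, (j + k) mod p)),
     one = (\<lambda>_. 1, 0) \<rparr>"

definition gen_a :: "(nat \<Rightarrow> complex) \<times> nat" where
  "gen_a = (\<lambda>_. 1, 1)"

definition Cp :: "nat \<Rightarrow> ((nat \<Rightarrow> complex) \<times> nat) set" where
  "Cp p = generate (Gamma p) {gen_a}"

definition center :: "('a, 'b) monoid_scheme \<Rightarrow> 'a set" where
  "center G = {z \<in> carrier G. \<forall>g \<in> carrier G. z \<otimes>\<^bsub>G\<^esub> g = g \<otimes>\<^bsub>G\<^esub> z}"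

definition xi :: "nat \<Rightarrow> complex" where
  "xi p = exp (2 * pi * \<i> / of_nat p)"

definition zeta :: "nat \<Rightarrow> (nat \<Rightarrow> complex) \<times> nat" where
  "zeta p = ((\<lambda>i. if i \<in> {1..p-1} then xi p ^ i else 1), 0)"

end

theory Submission
  imports Defs
begin

text \<open>(1) For a p-th root c of t_1 \<cdots> t_{p-1}, the element s with s_i = t_1 \<cdots> t_i / c^i
  satisfies s / rho(s) = t, i.e. s a s^{-1} = t a. So t a is conjugate to a, which has
  order p, and conjugation carries \<langle>a\<rangle> onto \<langle>t a\<rangle>.

  (2) A central element t a^j commutes with the torus, so rho^j = id on T^{p-1}; the
  constant element (\<i>, \<dots>, \<i>) shows that this forces j = 0. Commuting with a then means
  rho(t) = t, i.e. t_i = c^i with c = t_1 and c^p = 1, so t is a power of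
  (\<xi>_p, \<dots>, \<xi>_p^{p-1}).

  (3) Writing g = s a^j, g normalises \<langle>a\<rangle> iff s does, iff s a s^{-1} = (s / rho(s)) a
  lies in \<langle>a\<rangle>, iff rho(s) = s, iff s is central.\<close>

lemma funpow_fixpoint: "f x = x \<Longrightarrow> (f ^^ n) x = x"
  by (induction n) simp_all

lemma (in group) conjugation_group_hom:
  assumes "g \<in> carrier G"
  shows "group_hom G G (\<lambda>x. g \<otimes> x \<otimes> inv g)"
proof -
  have "(\<lambda>x. g \<otimes> x \<otimes> inv g) \<in> hom G G"
  proof (rule homI)
    fix x y
    assume "x \<in> carrier G" "y \<in> carrier G"
    then show "g \<otimes> (x \<otimes> y) \<otimes> inv g = g \<otimes> x \<otimes> inv g \<otimes> (g \<otimes> y \<otimes> inv g)"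
      using assms by (simp add: m_assoc) (simp add: m_assoc[symmetric])
  qed (use assms in simp)
  then show ?thesis
    by (intro group_hom.intro group_hom_axioms.intro) (simp_all add: is_group)
qed

lemma (in group) ord_conj:
  assumes "g \<in> carrier G" "x \<in> carrier G"
  shows "ord (g \<otimes> x \<otimes> inv g) = ord x"
proof -
  interpret c: group_hom G G "\<lambda>x. g \<otimes> x \<otimes> inv g"
    by (rule conjugation_group_hom[OF assms(1)])
  have "(g \<otimes> x \<otimes> inv g) [^] n = \<one> \<longleftrightarrow> x [^] n = \<one>" for n :: nat
  proof -
    have "(g \<otimes> x \<otimes> inv g) [^] n = g \<otimes> x [^] n \<otimes> inv g"
      using c.hom_nat_pow[of x n] assms by simp
    then show ?thesis
      using assms conjugation_is_inj[OF assms(1), of "x [^] n" \<one>] by auto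
  qed
  then show ?thesis
    using assms by (simp add: ord_unique pow_eq_id)
qed

lemma (in group) conj_generate:
  assumes "g \<in> carrier G" "x \<in> carrier G"
  shows "(\<lambda>y. g \<otimes> y \<otimes> inv g) ` generate G {x} = generate G {g \<otimes> x \<otimes> inv g}"
proof -
  interpret c: group_hom G G "\<lambda>x. g \<otimes> x \<otimes> inv g"
    by (rule conjugation_group_hom[OF assms(1)])
  show ?thesis
    using c.generate_img[of "{x}"] assms by simp
qed

lemma (in group) conj_mult_commuting:
  assumes "h \<in> carrier G" "c \<in> carrier G" "a \<in> carrier G" "c \<otimes> a = a \<otimes> c"
  shows "h \<otimes> c \<otimes> a \<otimes> inv (h \<otimes> c) = h \<otimes> a \<otimes> inv h"
proof -
  have "c \<otimes> a \<otimes> inv c = a \<otimes> c \<otimes> inv c"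
    by (simp only: assms(4))
  also have "\<dots> = a"
    using assms by (simp add: m_assoc)
  finally have "c \<otimes> a \<otimes> inv c = a" .
  moreover have "h \<otimes> c \<otimes> a \<otimes> inv (h \<otimes> c) = h \<otimes> (c \<otimes> a \<otimes> inv c) \<otimes> inv h"
    using assms(1-3) by (simp add: inv_mult_group m_assoc)
  ultimately show ?thesis
    by simp
qed

lemma (in group) normalizer_eq_conj_image:
  assumes "H \<subseteq> carrier G"
  shows "normalizer G H = {g \<in> carrier G. (\<lambda>h. g \<otimes> h \<otimes> inv g) ` H = H}"
proof -
  have "g <# H #> inv g = (\<lambda>h. g \<otimes> h \<otimes> inv g) ` H" for g
    by (auto simp: l_coset_def r_coset_def)
  then show ?thesis
    using assms by (simp add: normalizer_def stabilizer_def)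
qed

lemma (in group) center_mult_subset_normalizer:
  assumes "H \<subseteq> carrier G" and comm: "\<And>x y. x \<in> H \<Longrightarrow> y \<in> H \<Longrightarrow> x \<otimes> y = y \<otimes> x"
  shows "center G <#> H \<subseteq> normalizer G H"
proof
  fix g
  assume "g \<in> center G <#> H"
  then obtain z c where z: "z \<in> center G" and c: "c \<in> H" and g: "g = z \<otimes> c"
    by (auto simp: set_mult_def)
  have zc: "z \<in> carrier G" "c \<in> carrier G"
    using z c assms(1) by (auto simp: center_def)
  have "g \<otimes> x \<otimes> inv g = x" if x: "x \<in> H" for x
  proof -
    have "g \<otimes> x \<otimes> inv g = z \<otimes> x \<otimes> inv z"
      unfolding g using zc x assms(1) comm[OF c x] by (intro conj_mult_commuting) auto
    also have "\<dots> = x \<otimes> z \<otimes> inv z"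
      using z x assms(1) by (auto simp: center_def)
    also have "\<dots> = x"
      using zc x assms(1) by (auto simp: m_assoc)
    finally show ?thesis .
  qed
  then show "g \<in> normalizer G H"
    using zc assms(1) by (simp add: normalizer_eq_conj_image g)
qed

lemma unit_circle_root:
  assumes "cmod z = 1" "n > 0"
  shows "\<exists>c. cmod c = 1 \<and> c ^ n = z"
proof
  have "cis (Arg z / n) ^ n = cis (Arg z)"
    using assms(2) by (simp add: Complex.DeMoivre)
  also have "\<dots> = z"
  proof -
    have "z \<noteq> 0"
      using assms(1) by auto
    then show ?thesis
      using assms(1) by (simp add: cis_Arg sgn_div_norm)
  qed
  finally show "cmod (cis (Arg z / n)) = 1 \<and> cis (Arg z / n) ^ n = z"
    by simp
qed

lemma xi_pow_period: "p > 0 \<Longrightarrow> xi p ^ p = 1"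
  using complex_root_unity[of p 1] by (simp add: xi_def)

lemma root_of_unity_xi_pow:
  assumes "c ^ p = 1" "p > 0"
  shows "\<exists>m. c = xi p ^ m"
proof -
  obtain m where m: "c = exp (2 * of_real pi * \<i> * of_nat m / of_nat p)"
    using assms complex_roots_unity[of p] by auto
  have "xi p ^ m = exp (of_nat m * (2 * of_real pi * \<i> / of_nat p))"
    unfolding xi_def by (simp flip: exp_of_nat_mult)
  also have "\<dots> = c"
    unfolding m by (simp add: field_simps)
  finally show ?thesis
    by metis
qed

lemma torus_norm: "t \<in> torus p \<Longrightarrow> cmod (t i) = 1"
  unfolding torus_def by (cases "i \<in> {1..p-1}") auto

lemma torus_nonzero: "t \<in> torus p \<Longrightarrow> t i \<noteq> 0"
  using torus_norm[of t p i] by auto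

lemma torus_outside: "t \<in> torus p \<Longrightarrow> i \<notin> {1..p-1} \<Longrightarrow> t i = 1"
  unfolding torus_def by auto

lemma torusI: "(\<And>i. cmod (t i) = 1) \<Longrightarrow> (\<And>i. i \<notin> {1..p-1} \<Longrightarrow> t i = 1) \<Longrightarrow> t \<in> torus p"
  unfolding torus_def by auto

lemma torus_mult: "s \<in> torus p \<Longrightarrow> t \<in> torus p \<Longrightarrow> (\<lambda>i. s i * t i) \<in> torus p"
  by (rule torusI) (auto simp: norm_mult torus_norm torus_outside)

lemma torus_inverse: "t \<in> torus p \<Longrightarrow> (\<lambda>i. inverse (t i)) \<in> torus p"
  by (rule torusI) (auto simp: norm_inverse torus_norm torus_outside)

lemma torus_power: "t \<in> torus p \<Longrightarrow> (\<lambda>i. t i ^ m) \<in> torus p"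
  by (rule torusI) (auto simp: norm_power torus_norm torus_outside)

lemma torus_one: "(\<lambda>_. 1) \<in> torus p"
  by (rule torusI) auto

lemma rho_apply:
  assumes "t \<in> torus p" "i \<in> {1..p-1}"
  shows "rho p t i = t (i - 1) / t (p - 1)"
  using assms torus_outside[OF assms(1), of 0]
  by (cases "i = 1") (auto simp: rho_def divide_inverse)

lemma rho_power: "rho p (\<lambda>i. t i ^ m) = (\<lambda>i. rho p t i ^ m)"
  by (simp add: rho_def fun_eq_iff power_inverse power_mult_distrib)

definition cyc :: "nat \<Rightarrow> (nat \<Rightarrow> complex) \<Rightarrow> int \<Rightarrow> complex" where
  "cyc p t k = t (nat (k mod int p))"

text \<open>Extending t by t_0 = 1 and reading indices modulo p, rho is
  t_i \<mapsto> t_{i-1} / t_{-1}, hence rho^j is t_i \<mapsto> t_{i-j} / t_{-j}.\<close>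
definition rho_pow_closed :: "nat \<Rightarrow> nat \<Rightarrow> (nat \<Rightarrow> complex) \<Rightarrow> nat \<Rightarrow> complex" where
  "rho_pow_closed p j t =
     (\<lambda>i. if i \<in> {1..p-1} then cyc p t (int i - int j) / cyc p t (- int j) else 1)"

lemma cyc_nonzero: "t \<in> torus p \<Longrightarrow> cyc p t k \<noteq> 0"
  unfolding cyc_def by (rule torus_nonzero)

lemma rho_pow_closed_0:
  assumes "t \<in> torus p" "2 \<le> p"
  shows "rho_pow_closed p 0 t = t"
proof
  fix i
  show "rho_pow_closed p 0 t i = t i"
    using assms torus_outside[OF assms(1), of 0] torus_outside[OF assms(1), of i]
    by (auto simp: rho_pow_closed_def cyc_def)
qed

lemma rho_rho_pow_closed:
  assumes t: "t \<in> torus p" and p: "2 \<le> p"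
  shows "rho p (rho_pow_closed p j t) = rho_pow_closed p (Suc j) t"
proof
  fix i
  have last: "rho_pow_closed p j t (p-1) = cyc p t (-1 - int j) / cyc p t (- int j)"
  proof -
    have "int (p-1) - int j = (-1 - int j) + int p"
      using p by simp
    then have "(int (p-1) - int j) mod int p = (-1 - int j) mod int p"
      by (simp only: mod_add_self2)
    then show ?thesis using p unfolding rho_pow_closed_def cyc_def by simp
  qed
  have nz: "\<And>k. cyc p t k \<noteq> 0" using cyc_nonzero[OF t] .
  consider "i = 1" | "2 \<le> i \<and> i \<le> p-1" | "i \<notin> {1..p-1}" by force
  then show "rho p (rho_pow_closed p j t) i = rho_pow_closed p (Suc j) t i"
  proof cases
    case 1
    have "rho p (rho_pow_closed p j t) i = cyc p t (- int j) / cyc p t (-1 - int j)"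
      using 1 last by (simp add: rho_def)
    also have "\<dots> = rho_pow_closed p (Suc j) t i"
      using 1 p by (auto simp: rho_pow_closed_def)
    finally show ?thesis .
  next
    case 2
    then have "rho_pow_closed p j t (i-1) = cyc p t (int i - 1 - int j) / cyc p t (- int j)"
      by (auto simp: rho_pow_closed_def of_nat_diff)
    then have "rho p (rho_pow_closed p j t) i = cyc p t (int i - 1 - int j) / cyc p t (-1 - int j)"
      using 2 nz last by (simp add: rho_def)
    also have "\<dots> = rho_pow_closed p (Suc j) t i"
      using 2 by (simp add: rho_pow_closed_def diff_diff_eq)
    finally show ?thesis .
  next
    case 3
    then show ?thesis by (auto simp: rho_def rho_pow_closed_def)
  qed
qed

lemma rho_pow_eq_closed:
  assumes "t \<in> torus p" "2 \<le> p"
  shows "(rho p ^^ j) t = rho_pow_closed p j t"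
  by (induction j) (simp_all add: assms rho_pow_closed_0 rho_rho_pow_closed)

lemma rho_pow_torus:
  assumes "t \<in> torus p" "2 \<le> p"
  shows "(rho p ^^ j) t \<in> torus p"
  unfolding rho_pow_eq_closed[OF assms]
  by (rule torusI) (auto simp: rho_pow_closed_def cyc_def norm_divide torus_norm[OF assms(1)])

lemma rho_pow_period:
  assumes "t \<in> torus p" "2 \<le> p"
  shows "(rho p ^^ p) t = t"
proof -
  have "rho_pow_closed p p t = rho_pow_closed p 0 t"
    by (rule ext) (simp add: rho_pow_closed_def cyc_def)
  then show ?thesis
    using assms by (simp add: rho_pow_eq_closed rho_pow_closed_0)
qed

lemma rho_pow_mod:
  assumes "t \<in> torus p" "2 \<le> p"
  shows "(rho p ^^ (j mod p)) t = (rho p ^^ j) t"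
  by (rule funpow_mod_eq) (rule rho_pow_period[OF assms])

lemma rho_pow_mult:
  assumes "s \<in> torus p" "t \<in> torus p" "2 \<le> p"
  shows "(rho p ^^ j) (\<lambda>i. s i * t i) = (\<lambda>i. (rho p ^^ j) s i * (rho p ^^ j) t i)"
  using assms torus_mult[OF assms(1,2)]
  by (simp add: rho_pow_eq_closed rho_pow_closed_def cyc_def fun_eq_iff)

lemma rho_pow_one: "(rho p ^^ j) (\<lambda>_. 1) = (\<lambda>_. 1)"
  by (rule funpow_fixpoint) (simp add: rho_def fun_eq_iff)

lemma Gamma_mult [simp]:
  "(t, j) \<otimes>\<^bsub>Gamma p\<^esub> (s, k) = (\<lambda>i. t i * (rho p ^^ j) s i, (j + k) mod p)"
  by (simp add: Gamma_def)

lemma Gamma_one [simp]: "\<one>\<^bsub>Gamma p\<^esub> = (\<lambda>_. 1, 0)"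
  by (simp add: Gamma_def)

lemma Gamma_carrier: "carrier (Gamma p) = torus p \<times> {..<p}"
  by (simp add: Gamma_def)

lemma group_Gamma:
  assumes p: "2 \<le> p"
  shows "group (Gamma p)"
proof (rule groupI)
  fix x y
  assume "x \<in> carrier (Gamma p)" "y \<in> carrier (Gamma p)"
  then show "x \<otimes>\<^bsub>Gamma p\<^esub> y \<in> carrier (Gamma p)"
    using p by (auto simp: Gamma_carrier torus_mult rho_pow_torus)
next
  show "\<one>\<^bsub>Gamma p\<^esub> \<in> carrier (Gamma p)"
    using p by (simp add: Gamma_carrier torus_one)
next
  fix x y z
  assume "x \<in> carrier (Gamma p)" "y \<in> carrier (Gamma p)" "z \<in> carrier (Gamma p)"
  then obtain t j s k u l where x: "x = (t, j)" and y: "y = (s, k)" "s \<in> torus p"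
    and z: "z = (u, l)" "u \<in> torus p"
    by (auto simp: Gamma_carrier)
  have "(rho p ^^ j) (\<lambda>i. s i * (rho p ^^ k) u i) = (\<lambda>i. (rho p ^^ j) s i * (rho p ^^ (j + k)) u i)"
    using rho_pow_mult[OF y(2) rho_pow_torus[OF z(2) p] p] by (simp add: funpow_add)
  moreover have "(rho p ^^ ((j + k) mod p)) u = (rho p ^^ (j + k)) u"
    by (rule rho_pow_mod[OF z(2) p])
  ultimately show "x \<otimes>\<^bsub>Gamma p\<^esub> y \<otimes>\<^bsub>Gamma p\<^esub> z = x \<otimes>\<^bsub>Gamma p\<^esub> (y \<otimes>\<^bsub>Gamma p\<^esub> z)"
    unfolding x y z by (simp add: mod_add_left_eq mod_add_right_eq add.assoc mult.assoc)
next
  fix x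
  assume "x \<in> carrier (Gamma p)"
  then obtain t j where x: "x = (t, j)" "t \<in> torus p" "j < p"
    by (auto simp: Gamma_carrier)
  then show "\<one>\<^bsub>Gamma p\<^esub> \<otimes>\<^bsub>Gamma p\<^esub> x = x" by simp
  define k where "k = (p - j) mod p"
  define v where "v = (rho p ^^ k) t"
  have v: "v \<in> torus p"
    using x p by (simp add: v_def rho_pow_torus)
  have "(k + j) mod p = 0"
    using x(3) by (simp add: k_def mod_add_left_eq)
  then have "(\<lambda>i. inverse (v i), k) \<otimes>\<^bsub>Gamma p\<^esub> x = \<one>\<^bsub>Gamma p\<^esub>"
    using x torus_nonzero[OF v] by (simp add: v_def[symmetric])
  moreover have "(\<lambda>i. inverse (v i), k) \<in> carrier (Gamma p)"
    using v p by (simp add: Gamma_carrier torus_inverse k_def)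
  ultimately show "\<exists>y\<in>carrier (Gamma p). y \<otimes>\<^bsub>Gamma p\<^esub> x = \<one>\<^bsub>Gamma p\<^esub>"
    by blast
qed

lemma inv_Gamma_torus:
  assumes "s \<in> torus p" "2 \<le> p"
  shows "inv\<^bsub>Gamma p\<^esub> (s, 0) = (\<lambda>i. inverse (s i), 0)"
  using assms torus_inverse[OF assms(1)] torus_nonzero[OF assms(1)]
  by (intro group.inv_equality[OF group_Gamma]) (simp_all add: Gamma_carrier fun_eq_iff)

lemma pow_Gamma_torus: "(u, 0) [^]\<^bsub>Gamma p\<^esub> n = (\<lambda>i. u i ^ n, 0)"
  by (induction n) (simp_all add: mult.commute)

lemma gen_a_carrier: "2 \<le> p \<Longrightarrow> gen_a \<in> carrier (Gamma p)"
  by (simp add: gen_a_def Gamma_carrier torus_one)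

lemma pow_gen_a: "gen_a [^]\<^bsub>Gamma p\<^esub> n = (\<lambda>_. 1, n mod p)"
  by (induction n) (simp_all add: gen_a_def rho_pow_one mod_Suc_eq)

lemma ord_gen_a:
  assumes "2 \<le> p"
  shows "group.ord (Gamma p) gen_a = p"
proof -
  interpret G: group "Gamma p" by (rule group_Gamma[OF assms])
  show ?thesis
    using assms by (simp add: G.ord_unique gen_a_carrier pow_gen_a dvd_eq_mod_eq_0)
qed

lemma Cp_eq:
  assumes "2 \<le> p"
  shows "Cp p = (\<lambda>k. (\<lambda>_. 1, k)) ` {..<p}"
proof -
  interpret G: group "Gamma p" by (rule group_Gamma[OF assms])
  have "Cp p = {gen_a [^]\<^bsub>Gamma p\<^esub> k | k. k \<in> (UNIV :: nat set)}"
    unfolding Cp_def using assms by (simp add: G.generate_pow_nat gen_a_carrier ord_gen_a)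
  also have "\<dots> = (\<lambda>k. (\<lambda>_. 1, k)) ` range (\<lambda>k. k mod p)"
    by (auto simp: pow_gen_a)
  finally show ?thesis
    using assms by (simp add: range_mod atLeast0LessThan)
qed

lemma Cp_carrier: "2 \<le> p \<Longrightarrow> Cp p \<subseteq> carrier (Gamma p)"
  by (auto simp: Cp_eq Gamma_carrier torus_one)

lemma Cp_comm: "2 \<le> p \<Longrightarrow> x \<in> Cp p \<Longrightarrow> y \<in> Cp p \<Longrightarrow> x \<otimes>\<^bsub>Gamma p\<^esub> y = y \<otimes>\<^bsub>Gamma p\<^esub> x"
  by (auto simp: Cp_eq rho_pow_one add.commute)

lemma conj_gen_a:
  assumes "s \<in> torus p" "2 \<le> p"
  shows "(s, 0) \<otimes>\<^bsub>Gamma p\<^esub> gen_a \<otimes>\<^bsub>Gamma p\<^esub> inv\<^bsub>Gamma p\<^esub> (s, 0)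
    = (\<lambda>i. s i / rho p s i, 1)"
proof -
  have "rho p (\<lambda>i. inverse (s i)) = (\<lambda>i. inverse (rho p s i))"
    by (simp add: rho_def fun_eq_iff inverse_mult_distrib)
  then show ?thesis
    using assms by (simp add: inv_Gamma_torus gen_a_def divide_inverse)
qed

lemma torus_div_rho_surj:
  assumes t: "t \<in> torus p" and p: "2 \<le> p"
  shows "\<exists>s \<in> torus p. (\<lambda>i. s i / rho p s i) = t"
proof -
  define Q where "Q i = (\<Prod>k\<in>{1..i}. t k)" for i
  have Q_norm: "cmod (Q i) = 1" for i
    by (simp add: Q_def prod_norm[symmetric] torus_norm[OF t])
  have "Q 0 = 1"
    by (simp add: Q_def)
  obtain c where c: "cmod c = 1" "c ^ p = Q (p - 1)"
    using unit_circle_root[OF Q_norm, of p "p - 1"] p by auto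
  define s where "s i = (if i < p then Q i / c ^ i else 1)" for i
  have s: "s \<in> torus p"
    using \<open>Q 0 = 1\<close> by (intro torusI) (auto simp: s_def norm_divide norm_power c(1) Q_norm Suc_le_eq)
  obtain q where q: "p = Suc q"
    using p by (cases p) auto
  have "s i / rho p s i = t i" if i: "i \<in> {1..p-1}" for i
  proof -
    obtain m where m: "i = Suc m"
      using i by (cases i) auto
    have "Q m \<noteq> 0" "c \<noteq> 0"
      using Q_norm[of m] c(1) by auto
    have "s i / rho p s i = s (Suc m) * s q / s m"
      using rho_apply[OF s i] m q torus_nonzero[OF s] by simp
    also have "\<dots> = (Q m * t (Suc m) / c ^ Suc m) * (Q q / c ^ q) / (Q m / c ^ m)"
      using i m q by (simp add: s_def Q_def)
    also have "\<dots> = t (Suc m) * Q q / (c * c ^ q)"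
      using \<open>Q m \<noteq> 0\<close> \<open>c \<noteq> 0\<close> by (simp add: field_simps)
    also have "\<dots> = t i"
      using c m q Q_norm[of q] by auto
    finally show ?thesis .
  qed
  moreover have "s i / rho p s i = t i" if "i \<notin> {1..p-1}" for i
    using that p torus_outside[OF s] torus_outside[OF t] by (auto simp: rho_def)
  ultimately show ?thesis
    using s by blast
qed

lemma twisted_gen_a_conjugate:
  assumes "t \<in> torus p" "2 \<le> p"
  shows "\<exists>g \<in> carrier (Gamma p).
    g \<otimes>\<^bsub>Gamma p\<^esub> gen_a \<otimes>\<^bsub>Gamma p\<^esub> inv\<^bsub>Gamma p\<^esub> g = (t, 0) \<otimes>\<^bsub>Gamma p\<^esub> gen_a"
proof -
  obtain s where s: "s \<in> torus p" "(\<lambda>i. s i / rho p s i) = t"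
    using torus_div_rho_surj[OF assms] by blast
  have "(s, 0) \<in> carrier (Gamma p)"
    using s assms(2) by (simp add: Gamma_carrier)
  moreover have "(s, 0) \<otimes>\<^bsub>Gamma p\<^esub> gen_a \<otimes>\<^bsub>Gamma p\<^esub> inv\<^bsub>Gamma p\<^esub> (s, 0)
      = (\<lambda>i. s i / rho p s i, 1)"
    using s(1) assms(2) by (rule conj_gen_a)
  moreover have "(\<lambda>i. s i / rho p s i, 1) = (t, 0) \<otimes>\<^bsub>Gamma p\<^esub> gen_a"
    using s(2) assms(2) by (simp add: gen_a_def)
  ultimately show ?thesis
    by metis
qed

lemma ord_twisted_gen_a:
  assumes "t \<in> torus p" "2 \<le> p"
  shows "group.ord (Gamma p) ((t, 0) \<otimes>\<^bsub>Gamma p\<^esub> gen_a) = p"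
proof -
  interpret G: group "Gamma p" by (rule group_Gamma[OF assms(2)])
  obtain g where g: "g \<in> carrier (Gamma p)"
    and conj: "g \<otimes>\<^bsub>Gamma p\<^esub> gen_a \<otimes>\<^bsub>Gamma p\<^esub> inv\<^bsub>Gamma p\<^esub> g = (t, 0) \<otimes>\<^bsub>Gamma p\<^esub> gen_a"
    using twisted_gen_a_conjugate[OF assms] by blast
  show ?thesis
    using G.ord_conj[OF g gen_a_carrier[OF assms(2)]] by (simp add: conj ord_gen_a[OF assms(2)])
qed

lemma Cp_conjugate_twisted:
  assumes "t \<in> torus p" "2 \<le> p"
  shows "\<exists>g \<in> carrier (Gamma p).
    (\<lambda>x. g \<otimes>\<^bsub>Gamma p\<^esub> x \<otimes>\<^bsub>Gamma p\<^esub> inv\<^bsub>Gamma p\<^esub> g) ` Cp p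
    = generate (Gamma p) {(t, 0) \<otimes>\<^bsub>Gamma p\<^esub> gen_a}"
proof -
  interpret G: group "Gamma p" by (rule group_Gamma[OF assms(2)])
  obtain g where g: "g \<in> carrier (Gamma p)"
    and conj: "g \<otimes>\<^bsub>Gamma p\<^esub> gen_a \<otimes>\<^bsub>Gamma p\<^esub> inv\<^bsub>Gamma p\<^esub> g = (t, 0) \<otimes>\<^bsub>Gamma p\<^esub> gen_a"
    using twisted_gen_a_conjugate[OF assms] by blast
  then show ?thesis
    using G.conj_generate[OF g gen_a_carrier[OF assms(2)]] by (auto simp: Cp_def)
qed

lemma rho_fixed_central:
  assumes "t \<in> torus p" "rho p t = t" "2 \<le> p"
  shows "(t, 0) \<in> center (Gamma p)"
  using assms funpow_fixpoint[of "rho p" t]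
  by (auto simp: center_def Gamma_carrier mult.commute)

lemma central_rho_fixed:
  assumes central: "(t, j) \<in> center (Gamma p)" and p: "2 \<le> p"
  shows "j = 0 \<and> rho p t = t"
proof -
  have t: "t \<in> torus p" and j: "j < p"
    using central by (auto simp: center_def Gamma_carrier)
  have commutes: "(t, j) \<otimes>\<^bsub>Gamma p\<^esub> g = g \<otimes>\<^bsub>Gamma p\<^esub> (t, j)" if "g \<in> carrier (Gamma p)" for g
    using central that by (simp add: center_def)
  define \<sigma> where "\<sigma> i = (if i \<in> {1..p-1} then \<i> else 1)" for i
  have \<sigma>: "\<sigma> \<in> torus p"
    by (rule torusI) (simp_all add: \<sigma>_def)
  have "(\<lambda>i. t i * (rho p ^^ j) \<sigma> i) = (\<lambda>i. \<sigma> i * t i)"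
    using commutes[of "(\<sigma>, 0)"] \<sigma> p j by (simp add: Gamma_carrier)
  then have "(rho p ^^ j) \<sigma> j = \<sigma> j"
    using torus_nonzero[OF t, of j] by (metis mult.commute mult_left_cancel)
  then have j0: "j = 0"
  proof (rule contrapos_pp)
    assume "j \<noteq> 0"
    then have "(- int j) mod int p = int (p - j)"
      using j by (simp add: zmod_zminus1_eq_if of_nat_diff)
    then show "(rho p ^^ j) \<sigma> j \<noteq> \<sigma> j"
      using \<open>j \<noteq> 0\<close> j by (auto simp: rho_pow_eq_closed[OF \<sigma> p] rho_pow_closed_def cyc_def \<sigma>_def)
  qed
  have "rho p t = t"
    using commutes[OF gen_a_carrier[OF p]] j0 p by (simp add: gen_a_def fun_eq_iff)
  with j0 show ?thesis ..
qed

lemma center_Gamma: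
  assumes "2 \<le> p"
  shows "center (Gamma p) = {(t, 0) | t. t \<in> torus p \<and> rho p t = t}"
  using assms rho_fixed_central central_rho_fixed
  by (auto simp: center_def Gamma_carrier)

lemma zeta_torus: "fst (zeta p) \<in> torus p"
  by (rule torusI) (auto simp: zeta_def norm_power xi_def)

lemma zeta_eq: "zeta p = (fst (zeta p), 0)"
  by (simp add: zeta_def)

lemma rho_zeta: "2 \<le> p \<Longrightarrow> rho p (fst (zeta p)) = fst (zeta p)"
proof
  fix i
  assume p: "2 \<le> p"
  show "rho p (fst (zeta p)) i = fst (zeta p) i"
  proof (cases "i \<in> {1..p-1}")
    case True
    have "xi p ^ (i - 1) = xi p ^ (i - 1) * xi p ^ p"
      using p by (simp add: xi_pow_period)
    also have "\<dots> = xi p ^ i * xi p ^ (p - 1)"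
      using True p by (simp flip: power_add)
    finally have xi_shift: "xi p ^ (i - 1) / xi p ^ (p - 1) = xi p ^ i"
      by (simp add: xi_def)
    have "rho p (fst (zeta p)) i = fst (zeta p) (i - 1) / fst (zeta p) (p - 1)"
      by (rule rho_apply[OF zeta_torus True])
    also have "\<dots> = xi p ^ (i - 1) / xi p ^ (p - 1)"
      using True p by (auto simp: zeta_def)
    also have "\<dots> = fst (zeta p) i"
      using True xi_shift by (simp add: zeta_def)
    finally show ?thesis .
  next
    case False
    then show ?thesis
      by (auto simp: rho_def zeta_def)
  qed
qed

lemma rho_fixed_imp_zeta_pow:
  assumes t: "t \<in> torus p" and fixed: "rho p t = t" and p: "2 \<le> p"
  shows "\<exists>m. t = (\<lambda>i. fst (zeta p) i ^ m)"
proof -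
  define c where "c = t 1"
  have "c = inverse (t (p - 1))"
    using fixed unfolding c_def by (metis rho_def)
  then have step: "t i = t (i - 1) * c" if "i \<in> {1..p-1}" for i
    using rho_apply[OF t that] fixed by (simp add: divide_inverse)
  have powers: "t i = c ^ i" if "i \<le> p - 1" for i
    using that
  proof (induction i)
    case 0
    then show ?case
      using torus_outside[OF t, of 0] by simp
  next
    case (Suc i)
    then show ?case
      using step[of "Suc i"] by simp
  qed
  have "c ^ p = t (p - 1) * c"
    using p powers[of "p - 1"] by (simp flip: power_Suc2)
  also have "\<dots> = 1"
    using \<open>c = inverse (t (p - 1))\<close> torus_nonzero[OF t] by simp
  finally obtain m where m: "c = xi p ^ m"
    using root_of_unity_xi_pow[of c p] p by auto
  have "t i = fst (zeta p) i ^ m" for i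
    using powers[of i] torus_outside[OF t, of i]
    by (auto simp: zeta_def m simp flip: power_mult simp add: mult.commute)
  then show ?thesis
    by blast
qed

lemma center_eq_zeta_powers:
  assumes p: "2 \<le> p"
  shows "center (Gamma p) = {zeta p [^]\<^bsub>Gamma p\<^esub> m | m. m \<in> (UNIV :: nat set)}"
proof -
  have "zeta p [^]\<^bsub>Gamma p\<^esub> m = ((\<lambda>i. fst (zeta p) i ^ m), 0)" for m
    by (subst zeta_eq) (rule pow_Gamma_torus)
  moreover have "(\<lambda>i. fst (zeta p) i ^ m) \<in> torus p" for m
    by (rule torus_power[OF zeta_torus])
  moreover have "rho p (\<lambda>i. fst (zeta p) i ^ m) = (\<lambda>i. fst (zeta p) i ^ m)" for m
    using p by (simp add: rho_power rho_zeta)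
  ultimately show ?thesis
    using p by (auto simp: center_Gamma dest: rho_fixed_imp_zeta_pow)
qed

lemma center_eq_generate_zeta:
  assumes p: "2 \<le> p"
  shows "center (Gamma p) = generate (Gamma p) {zeta p}"
proof -
  interpret G: group "Gamma p" by (rule group_Gamma[OF p])
  have "zeta p \<in> carrier (Gamma p)"
    using p zeta_torus by (subst zeta_eq) (simp add: Gamma_carrier)
  moreover have "(xi p ^ i) ^ p = 1" for i
    using p xi_pow_period[of p] by (metis power_mult mult.commute power_one not_gr0 not_numeral_le_zero)
  then have "fst (zeta p) i ^ p = 1" for i
    by (simp add: zeta_def)
  then have "zeta p [^]\<^bsub>Gamma p\<^esub> p = \<one>\<^bsub>Gamma p\<^esub>"
    by (subst zeta_eq) (simp add: pow_Gamma_torus)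
  ultimately have "G.ord (zeta p) \<noteq> 0"
    using p by (auto simp: G.ord_eq_0 intro!: exI[of _ p])
  then show ?thesis
    using \<open>zeta p \<in> carrier (Gamma p)\<close> by (simp add: center_eq_zeta_powers[OF p] G.generate_pow_nat)
qed

lemma center_inter_Cp:
  assumes "2 \<le> p"
  shows "center (Gamma p) \<inter> Cp p = {\<one>\<^bsub>Gamma p\<^esub>}"
proof -
  have "rho p (\<lambda>_. 1) = (\<lambda>_. 1)"
    using rho_pow_one[where j = 1] by simp
  then show ?thesis
    using assms torus_one[of p] by (auto simp: center_Gamma Cp_eq)
qed

lemma normalizer_Cp_subset:
  assumes p: "2 \<le> p"
  shows "normalizer (Gamma p) (Cp p) \<subseteq> center (Gamma p) <#>\<^bsub>Gamma p\<^esub> Cp p"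
proof
  interpret G: group "Gamma p" by (rule group_Gamma[OF p])
  fix g
  assume "g \<in> normalizer (Gamma p) (Cp p)"
  then have g: "g \<in> carrier (Gamma p)"
    and normalizes: "(\<lambda>h. g \<otimes>\<^bsub>Gamma p\<^esub> h \<otimes>\<^bsub>Gamma p\<^esub> inv\<^bsub>Gamma p\<^esub> g) ` Cp p = Cp p"
    by (simp_all add: G.normalizer_eq_conj_image[OF Cp_carrier[OF p]])
  obtain s j where s: "s \<in> torus p" and j: "j < p" and "g = (s, j)"
    using g by (auto simp: Gamma_carrier)
  then have g_eq: "g = (s, 0) \<otimes>\<^bsub>Gamma p\<^esub> (\<lambda>_. 1, j)"
    by simp
  have c: "(\<lambda>_. 1, j) \<in> Cp p" and a: "gen_a \<in> Cp p"
    using j p by (auto simp: Cp_eq gen_a_def)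
  have "g \<otimes>\<^bsub>Gamma p\<^esub> gen_a \<otimes>\<^bsub>Gamma p\<^esub> inv\<^bsub>Gamma p\<^esub> g \<in> Cp p"
    by (subst normalizes[symmetric]) (rule imageI[OF a])
  have "(s, 0) \<in> carrier (Gamma p)"
    using s p by (simp add: Gamma_carrier)
  then have "g \<otimes>\<^bsub>Gamma p\<^esub> gen_a \<otimes>\<^bsub>Gamma p\<^esub> inv\<^bsub>Gamma p\<^esub> g
      = (s, 0) \<otimes>\<^bsub>Gamma p\<^esub> gen_a \<otimes>\<^bsub>Gamma p\<^esub> inv\<^bsub>Gamma p\<^esub> (s, 0)"
    unfolding g_eq using c a Cp_carrier[OF p] Cp_comm[OF p c a]
    by (intro G.conj_mult_commuting) blast+
  also have "\<dots> = (\<lambda>i. s i / rho p s i, 1)"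
    by (rule conj_gen_a[OF s p])
  finally have "(\<lambda>i. s i / rho p s i, 1) \<in> Cp p"
    using \<open>g \<otimes>\<^bsub>Gamma p\<^esub> gen_a \<otimes>\<^bsub>Gamma p\<^esub> inv\<^bsub>Gamma p\<^esub> g \<in> Cp p\<close> by simp
  then have "(\<lambda>i. s i / rho p s i) = (\<lambda>_. 1)"
    by (auto simp: Cp_eq[OF p])
  then have "rho p s = s"
    using torus_nonzero[OF rho_pow_torus[OF s p, of 1]] by (simp add: fun_eq_iff)
  then have "(s, 0) \<in> center (Gamma p)"
    by (rule rho_fixed_central[OF s _ p])
  then show "g \<in> center (Gamma p) <#>\<^bsub>Gamma p\<^esub> Cp p"
    using g_eq c unfolding set_mult_def by blast
qed

theorem lemma3p4:
  fixes p :: nat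
  assumes "Factorial_Ring.prime p"
  shows "group (Gamma p)
    \<and> (\<forall>t \<in> torus p.
          group.ord (Gamma p) ((t, 0) \<otimes>\<^bsub>Gamma p\<^esub> gen_a) = p
        \<and> (\<exists>g \<in> carrier (Gamma p).
             (\<lambda>x. g \<otimes>\<^bsub>Gamma p\<^esub> x \<otimes>\<^bsub>Gamma p\<^esub> inv\<^bsub>Gamma p\<^esub> g) ` Cp p
             = generate (Gamma p) {(t, 0) \<otimes>\<^bsub>Gamma p\<^esub> gen_a}))
    \<and> center (Gamma p) = generate (Gamma p) {zeta p}
    \<and> center (Gamma p) \<subseteq> torus p \<times> {0}
    \<and> normalizer (Gamma p) (Cp p) = center (Gamma p) <#>\<^bsub>Gamma p\<^esub> Cp p
    \<and> center (Gamma p) \<inter> Cp p = {\<one>\<^bsub>Gamma p\<^esub>}"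
proof -
  have p: "2 \<le> p"
    using assms prime_ge_2_nat by blast
  interpret G: group "Gamma p"
    by (rule group_Gamma[OF p])
  have "\<forall>t \<in> torus p. G.ord ((t, 0) \<otimes>\<^bsub>Gamma p\<^esub> gen_a) = p
      \<and> (\<exists>g \<in> carrier (Gamma p).
            (\<lambda>x. g \<otimes>\<^bsub>Gamma p\<^esub> x \<otimes>\<^bsub>Gamma p\<^esub> inv\<^bsub>Gamma p\<^esub> g) ` Cp p
            = generate (Gamma p) {(t, 0) \<otimes>\<^bsub>Gamma p\<^esub> gen_a})"
    using ord_twisted_gen_a[OF _ p] Cp_conjugate_twisted[OF _ p] by simp
  moreover have "normalizer (Gamma p) (Cp p) = center (Gamma p) <#>\<^bsub>Gamma p\<^esub> Cp p"
    using normalizer_Cp_subset[OF p] G.center_mult_subset_normalizer[OF Cp_carrier[OF p] Cp_comm[OF p]]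
    by blast
  moreover have "center (Gamma p) \<subseteq> torus p \<times> {0}"
    using center_Gamma[OF p] by auto
  ultimately show ?thesis
    using G.is_group center_eq_generate_zeta[OF p] center_inter_Cp[OF p] by blast
qed

end
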